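(* Let $W$ be a binary-input channel and define recursively $L_0=R_0=W$, $L_{n+1}=(L_n,R_n)^-$, $R_{n+1}=(L_n,R_n)^+$ for $n\ge 0$. Then for all $n\ge0$, $I(L_n)+I(R_n)=2I(W)$ and $I(L_{n+1})\le I(L_n)\le I(R_n)\le I(R_{n+1})$.
   Context: A binary-input channel $W\colon\{0,1\}\to\mathcal{Y}$ is a family of transition probabilities $W(y\mid x)$ on a discrete output alphabet. Its symmetric capacity $I(W)$ is the mutual information (in bits) between a uniformly distributed input in $\{0,1\}$ and the output. For binary-input channels $W\colon\{0,1\}\to\mathcal{Y}$, $V\colon\{0,1\}\to\mathcal{Z}$ define $(W,V)^-(y,z\mid x)=\sum_{u\in\{0,1\}}\tfrac12 W(y\mid u+x)V(z\mid u)$ and $(W,V)^+(y,z,u\mid x)=\tfrac12 W(y\mid u+x)V(z\mid x)$, addition modulo 2. *)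

theory Defs
  imports "HOL-Analysis.Analysis"
begin

text \<open>Binary inputs {0,1} are represented by bool (0 = False, 1 = True);
  addition modulo 2 is exclusive or, u + x = (u \<noteq> x).
  A binary-input channel with output alphabet 'y is a transition kernel
  W x y = W(y | x).\<close>

type_synonym 'y chan = "bool \<Rightarrow> 'y \<Rightarrow> real"

definition is_channel :: "'y chan \<Rightarrow> bool" where
  "is_channel W \<longleftrightarrow> (\<forall>x y. 0 \<le> W x y) \<and> (\<forall>x. (W x has_sum 1) UNIV)"

text \<open>Symmetric capacity: mutual information (bits) between a uniform input and the
  output, I(W) = sum_y sum_x 1/2 W(y|x) log2 (W(y|x) / q(y)), q(y) = (W(y|0)+W(y|1))/2,
  with the convention 0 log 0 = 0.\<close>

definition sym_cap :: "'y chan \<Rightarrow> real" where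
  "sym_cap W = (\<Sum>\<^sub>\<infinity> y. \<Sum>x\<in>UNIV.
     (if W x y = 0 then 0
      else 1/2 * W x y * log 2 (W x y / ((W False y + W True y) / 2))))"

definition chan_minus :: "'a chan \<Rightarrow> 'b chan \<Rightarrow> ('a \<times> 'b) chan" where
  "chan_minus W V x = (\<lambda>(y, z). \<Sum>u\<in>UNIV. 1/2 * W (u \<noteq> x) y * V u z)"

definition chan_plus :: "'a chan \<Rightarrow> 'b chan \<Rightarrow> ('a \<times> 'b \<times> bool) chan" where
  "chan_plus W V x = (\<lambda>(y, z, u). 1/2 * W (u \<noteq> x) y * V x z)"

definition chan_map :: "('a \<Rightarrow> 'b) \<Rightarrow> 'a chan \<Rightarrow> 'b chan" where
  "chan_map f W x z = (if z \<in> range f then W x (inv f z) else 0)"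

text \<open>Common output alphabet for all the channels L_n, R_n: trees over 'y.
  The outputs of (L_n,R_n)^- are pairs (Pair2), those of (L_n,R_n)^+ triples (Pair3).\<close>
datatype 'y otree = Base 'y | Pair2 "'y otree" "'y otree" | Pair3 "'y otree" "'y otree" bool

fun LR :: "'y chan \<Rightarrow> nat \<Rightarrow> 'y otree chan \<times> 'y otree chan" where
  "LR W 0 = (chan_map Base W, chan_map Base W)"
| "LR W (Suc n) =
     (let (L, R) = LR W n in
       (chan_map (\<lambda>(a, b). Pair2 a b) (chan_minus L R),
        chan_map (\<lambda>(a, b, u). Pair3 a b u) (chan_plus L R)))"

definition Lch :: "'y chan \<Rightarrow> nat \<Rightarrow> 'y otree chan" where
  "Lch W n = fst (LR W n)"

definition Rch :: "'y chan \<Rightarrow> nat \<Rightarrow> 'y otree chan" where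
  "Rch W n = snd (LR W n)"

end

theory Submission
  imports Defs
begin

text \<open>Writing \<open>\<phi>(t) = t log t\<close>, the symmetric capacity is the sum over outputs \<open>y\<close> of the
  Jensen gap \<open>(\<phi>(a) + \<phi>(b))/2 - \<phi>((a + b)/2)\<close> at \<open>a = W(y|0)\<close>, \<open>b = W(y|1)\<close>. This gap is
  positively homogeneous and, by the log-sum inequality, subadditive. For the two polar
  transforms the chain rule \<open>I((W,V)\<^sup>-) + I((W,V)\<^sup>+) = I(W) + I(V)\<close> holds output by output as
  an identity between Jensen gaps, while subadditivity and homogeneity give
  \<open>I((W,V)\<^sup>-) \<le> I(W)\<close>. Since \<open>L\<^sub>0 = R\<^sub>0\<close>, induction on \<open>n\<close> yields the claim.\<close>

definition plogp :: "real \<Rightarrow> real" where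
  "plogp t = t * log 2 t"

definition kl_term :: "real \<Rightarrow> real \<Rightarrow> real" where
  "kl_term w q = (if w = 0 then 0 else w * log 2 (w / q))"

definition jensen_gap :: "real \<Rightarrow> real \<Rightarrow> real" where
  "jensen_gap a b = (plogp a + plogp b) / 2 - plogp ((a + b) / 2)"

lemma plogp_mult:
  assumes "0 \<le> x" "0 \<le> y"
  shows "plogp (x * y) = x * plogp y + y * plogp x"
proof (cases "x = 0 \<or> y = 0")
  case True
  then show ?thesis by (auto simp: plogp_def)
next
  case False
  with assms have "0 < x" "0 < y" by auto
  then show ?thesis by (simp add: plogp_def log_mult algebra_simps)
qed

lemma kl_term_eq_plogp:
  assumes "0 \<le> w" "0 < w \<Longrightarrow> 0 < q"
  shows "kl_term w q = plogp w - w * log 2 q"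
  using assms by (auto simp: kl_term_def plogp_def log_divide algebra_simps)

lemma kl_term_tangent_le:
  assumes "0 \<le> a" "0 \<le> s" "0 < a \<Longrightarrow> 0 < s" "0 < r"
  shows "a * log 2 r + (a - s * r) / ln 2 \<le> kl_term a s"
proof (cases "a = 0")
  case True
  with assms show ?thesis by (simp add: kl_term_def divide_nonpos_pos)
next
  case False
  with assms have a: "0 < a" and s: "0 < s" by auto
  have "ln r - ln (a / s) = ln (s * r / a)"
    using a s \<open>0 < r\<close> by (simp add: ln_div ln_mult)
  also have "\<dots> \<le> s * r / a - 1"
    using a s \<open>0 < r\<close> by (intro ln_le_minus_one) auto
  finally have "a * ln r + (a - s * r) \<le> a * ln (a / s)"
    using a by (simp add: field_simps)
  then have "(a * ln r + (a - s * r)) / ln 2 \<le> a * ln (a / s) / ln 2"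
    by (simp add: divide_right_mono)
  with False show ?thesis
    by (simp add: kl_term_def log_def add_divide_distrib)
qed

lemma kl_term_add_le:
  assumes "0 \<le> a1" "0 \<le> a2" "0 \<le> s1" "0 \<le> s2" "0 < a1 \<Longrightarrow> 0 < s1" "0 < a2 \<Longrightarrow> 0 < s2"
  shows "kl_term (a1 + a2) (s1 + s2) \<le> kl_term a1 s1 + kl_term a2 s2"
proof (cases "a1 + a2 = 0")
  case True
  with assms show ?thesis by (simp add: kl_term_def)
next
  case False
  with assms have "0 < a1 \<or> 0 < a2" by linarith
  with assms have "0 < a1 + a2" "0 < s1 + s2" by auto
  define r where "r = (a1 + a2) / (s1 + s2)"
  have r: "0 < r" "(s1 + s2) * r = a1 + a2"
    using \<open>0 < a1 + a2\<close> \<open>0 < s1 + s2\<close> by (simp_all add: r_def)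
  have "kl_term (a1 + a2) (s1 + s2) = (a1 + a2) * log 2 r"
    using False by (simp add: kl_term_def r_def)
  also have "\<dots> = (a1 + a2) * log 2 r + ((a1 + a2) - (s1 + s2) * r) / ln 2"
    using r(2) by simp
  also have "\<dots> = (a1 * log 2 r + (a1 - s1 * r) / ln 2) + (a2 * log 2 r + (a2 - s2 * r) / ln 2)"
    by (simp add: algebra_simps diff_divide_distrib add_divide_distrib)
  also have "\<dots> \<le> kl_term a1 s1 + kl_term a2 s2"
    using assms r(1) by (intro add_mono kl_term_tangent_le) auto
  finally show ?thesis .
qed

lemma jensen_gap_eq_kl_terms:
  assumes "0 \<le> a" "0 \<le> b"
  shows "jensen_gap a b = (kl_term a ((a + b) / 2) + kl_term b ((a + b) / 2)) / 2"
  using assms by (simp add: jensen_gap_def kl_term_eq_plogp plogp_def field_simps)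

lemma jensen_gap_commute: "jensen_gap a b = jensen_gap b a"
  by (simp add: jensen_gap_def add.commute)

lemma jensen_gap_subadd:
  assumes "0 \<le> a1" "0 \<le> a2" "0 \<le> b1" "0 \<le> b2"
  shows "jensen_gap (a1 + a2) (b1 + b2) \<le> jensen_gap a1 b1 + jensen_gap a2 b2"
proof -
  have mid: "(a1 + a2 + (b1 + b2)) / 2 = (a1 + b1) / 2 + (a2 + b2) / 2"
    by (simp add: field_simps)
  have "kl_term (a1 + a2) ((a1 + a2 + (b1 + b2)) / 2)
      \<le> kl_term a1 ((a1 + b1) / 2) + kl_term a2 ((a2 + b2) / 2)"
    unfolding mid using assms by (intro kl_term_add_le) auto
  moreover have "kl_term (b1 + b2) ((a1 + a2 + (b1 + b2)) / 2)
      \<le> kl_term b1 ((a1 + b1) / 2) + kl_term b2 ((a2 + b2) / 2)"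
    unfolding mid using assms by (intro kl_term_add_le) auto
  ultimately show ?thesis
    using assms by (simp add: jensen_gap_eq_kl_terms field_simps)
qed

lemma jensen_gap_scale:
  assumes "0 \<le> c" "0 \<le> a" "0 \<le> b"
  shows "jensen_gap (c * a) (c * b) = c * jensen_gap a b"
proof -
  have mid: "(c * a + c * b) / 2 = c * ((a + b) / 2)"
    by (simp add: algebra_simps)
  have "plogp (c * ((a + b) / 2)) = c * plogp ((a + b) / 2) + (a + b) / 2 * plogp c"
    using assms by (intro plogp_mult) auto
  with assms show ?thesis
    unfolding jensen_gap_def mid by (simp add: plogp_mult algebra_simps)
qed

lemma jensen_gap_nonneg:
  assumes "0 \<le> a" "0 \<le> b"
  shows "0 \<le> jensen_gap a b"
proof -
  have mid: "(a + b + (b + a)) / 2 = a + b"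
    by simp
  have "jensen_gap (a + b) (b + a) = 0"
    unfolding jensen_gap_def mid by (simp add: add.commute)
  moreover have "jensen_gap (a + b) (b + a) \<le> jensen_gap a b + jensen_gap b a"
    using assms by (intro jensen_gap_subadd)
  ultimately show ?thesis by (simp add: jensen_gap_commute)
qed

lemma jensen_gap_le:
  assumes "0 \<le> a" "0 \<le> b"
  shows "jensen_gap a b \<le> (a + b) / 2"
proof -
  have "kl_term x ((x + y) / 2) \<le> x" if "0 \<le> x" "0 \<le> y" for x y
  proof (cases "x = 0")
    case False
    with that have "log 2 (x / ((x + y) / 2)) \<le> log 2 2"
      by (subst log_le_cancel_iff) (auto simp: field_simps)
    with False that show ?thesis
      by (simp add: kl_term_def mult_left_le)
  qed (simp add: kl_term_def)
  from this[of a b] this[of b a] assms show ?thesis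
    by (simp add: jensen_gap_eq_kl_terms add.commute)
qed

lemma jensen_gap_mix_le:
  assumes "0 \<le> w0" "0 \<le> w1" "0 \<le> p0" "0 \<le> p1"
  shows "jensen_gap (1/2 * w0 * p0 + 1/2 * w1 * p1) (1/2 * w1 * p0 + 1/2 * w0 * p1)
       \<le> jensen_gap w0 w1 * ((p0 + p1) / 2)"
proof -
  have "jensen_gap (1/2 * w0 * p0 + 1/2 * w1 * p1) (1/2 * w1 * p0 + 1/2 * w0 * p1)
      = jensen_gap (p0/2 * w0 + p1/2 * w1) (p0/2 * w1 + p1/2 * w0)"
    by (simp add: algebra_simps)
  also have "\<dots> \<le> jensen_gap (p0/2 * w0) (p0/2 * w1) + jensen_gap (p1/2 * w1) (p1/2 * w0)"
    using assms by (intro jensen_gap_subadd) auto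
  also have "\<dots> = p0/2 * jensen_gap w0 w1 + p1/2 * jensen_gap w1 w0"
    using assms by (subst (1 2) jensen_gap_scale) auto
  also have "\<dots> = jensen_gap w0 w1 * ((p0 + p1) / 2)"
    by (simp add: jensen_gap_commute[of w1 w0] algebra_simps)
  finally show ?thesis .
qed

text \<open>The pointwise form of the chain rule for the two polar transforms.\<close>
lemma jensen_gap_chain:
  assumes "0 \<le> w0" "0 \<le> w1" "0 \<le> p0" "0 \<le> p1"
  shows "jensen_gap (1/2 * w0 * p0 + 1/2 * w1 * p1) (1/2 * w1 * p0 + 1/2 * w0 * p1)
       + jensen_gap (1/2 * w0 * p0) (1/2 * w1 * p1) + jensen_gap (1/2 * w1 * p0) (1/2 * w0 * p1)
       = jensen_gap w0 w1 * ((p0 + p1) / 2) + (w0 + w1) / 2 * jensen_gap p0 p1"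
proof -
  have half: "plogp (x / 2) = plogp x / 2 - x / 2" if "0 \<le> x" for x
    using plogp_mult[of "1/2" x] that by (simp add: plogp_def log_divide)
  have half_prod: "plogp (1/2 * x * y) = (x * plogp y + y * plogp x) / 2 - x * y / 2"
    if "0 \<le> x" "0 \<le> y" for x y
    using half[of "x * y"] that by (simp add: plogp_mult)
  have half_mean: "plogp ((1/2 * x * y + 1/2 * z * t) / 2)
      = plogp (1/2 * x * y + 1/2 * z * t) / 2 - (1/2 * x * y + 1/2 * z * t) / 2"
    if "0 \<le> x" "0 \<le> y" "0 \<le> z" "0 \<le> t" for x y z t
    using half that by simp
  have mix: "(1/2 * w0 * p0 + 1/2 * w1 * p1 + (1/2 * w1 * p0 + 1/2 * w0 * p1)) / 2
      = (w0 + w1) / 2 * ((p0 + p1) / 2)"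
    by (simp add: algebra_simps)
  have mean: "plogp ((1/2 * w0 * p0 + 1/2 * w1 * p1 + (1/2 * w1 * p0 + 1/2 * w0 * p1)) / 2)
      = (w0 + w1) / 2 * plogp ((p0 + p1) / 2) + (p0 + p1) / 2 * plogp ((w0 + w1) / 2)"
    unfolding mix using assms by (intro plogp_mult) auto
  show ?thesis
    unfolding jensen_gap_def mean half_prod[OF assms(1,3)] half_prod[OF assms(2,4)]
      half_prod[OF assms(2,3)] half_prod[OF assms(1,4)]
      half_mean[OF assms(1,3,2,4)] half_mean[OF assms(2,3,1,4)]
    by (simp add: field_simps)
qed

lemma has_sum_mult_product:
  fixes f :: "'a \<Rightarrow> real" and g :: "'b \<Rightarrow> real"
  assumes f: "(f has_sum a) A" and g: "(g has_sum b) B"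
    and "\<And>x. 0 \<le> f x" "\<And>y. 0 \<le> g y"
  shows "((\<lambda>(x, y). f x * g y) has_sum a * b) (A \<times> B)"
proof -
  have slice: "((\<lambda>y. f x * g y) has_sum f x * b) B" for x
    using g by (rule has_sum_cmult_right)
  have "(\<lambda>(x, y). f x * g y) summable_on A \<times> B"
    using slice has_sum_cmult_left[OF f] assms(3,4)
    by (intro summable_on_SigmaI[where g = "\<lambda>x. f x * b"]) (auto simp: summable_on_def)
  with slice has_sum_cmult_left[OF f] show ?thesis
    by (intro has_sum_SigmaI[where g = "\<lambda>x. f x * b"]) auto
qed

lemma has_sum_split_bool:
  fixes h :: "'a \<times> 'b \<times> bool \<Rightarrow> 'c::topological_comm_monoid_add"
  assumes "((\<lambda>(y, z). h (y, z, False)) has_sum a) UNIV"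
    and "((\<lambda>(y, z). h (y, z, True)) has_sum b) UNIV"
  shows "(h has_sum a + b) UNIV"
proof -
  define e :: "bool \<Rightarrow> 'a \<times> 'b \<Rightarrow> 'a \<times> 'b \<times> bool"
    where "e u = (\<lambda>(y, z). (y, z, u))" for u
  have inj: "inj (e u)" for u
    by (auto simp: e_def inj_on_def)
  have "(h has_sum a) (range (e False))" "(h has_sum b) (range (e True))"
    using assms by (subst has_sum_reindex[OF inj]; simp add: e_def o_def case_prod_beta')+
  moreover have "range (e False) \<inter> range (e True) = {}"
    by (auto simp: e_def)
  moreover have "range (e False) \<union> range (e True) = UNIV"
    by (auto simp: e_def image_iff)
  ultimately show ?thesis
    by (metis has_sum_Un_disjoint)
qed

definition out_dist :: "'y chan \<Rightarrow> 'y \<Rightarrow> real" where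
  "out_dist W y = (W False y + W True y) / 2"

definition cap_term :: "'y chan \<Rightarrow> 'y \<Rightarrow> real" where
  "cap_term W y = jensen_gap (W False y) (W True y)"

lemma is_channel_nonneg: "is_channel W \<Longrightarrow> 0 \<le> W x y"
  by (simp add: is_channel_def)

lemma has_sum_out_dist:
  assumes "is_channel W"
  shows "(out_dist W has_sum 1) UNIV"
proof -
  have "((\<lambda>y. W False y + W True y) has_sum 1 + 1) UNIV"
    using assms by (intro has_sum_add) (auto simp: is_channel_def)
  from has_sum_cmult_right[OF this, of "1/2"] show ?thesis
    by (simp add: out_dist_def[abs_def])
qed

lemma cap_term_nonneg: "is_channel W \<Longrightarrow> 0 \<le> cap_term W y"
  by (simp add: cap_term_def jensen_gap_nonneg is_channel_nonneg)

lemma cap_term_le_out_dist: "is_channel W \<Longrightarrow> cap_term W y \<le> out_dist W y"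
  unfolding cap_term_def out_dist_def by (intro jensen_gap_le is_channel_nonneg)

lemma sym_cap_eq_infsum_cap_term:
  assumes "\<And>x y. 0 \<le> W x y"
  shows "sym_cap W = (\<Sum>\<^sub>\<infinity>y. cap_term W y)"
proof -
  have "(\<Sum>x\<in>UNIV. if W x y = 0 then 0
      else 1/2 * W x y * log 2 (W x y / ((W False y + W True y) / 2))) = cap_term W y" for y
    using assms by (simp add: cap_term_def jensen_gap_eq_kl_terms kl_term_def UNIV_bool add_divide_distrib)
  then show ?thesis
    by (simp add: sym_cap_def)
qed

lemma has_sum_cap_term:
  assumes "is_channel W"
  shows "(cap_term W has_sum sym_cap W) UNIV"
proof -
  have "cap_term W summable_on UNIV"
    by (rule summable_on_comparison_test[of "out_dist W"])
      (use has_sum_out_dist[OF assms] cap_term_nonneg[OF assms] cap_term_le_out_dist[OF assms]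
        in \<open>auto simp: summable_on_def\<close>)
  then show ?thesis
    using assms by (simp add: sym_cap_eq_infsum_cap_term is_channel_nonneg)
qed

lemma is_channel_chan_map:
  assumes "inj f" "is_channel W"
  shows "is_channel (chan_map f W)"
  unfolding is_channel_def
proof (intro conjI allI)
  fix x z
  show "0 \<le> chan_map f W x z"
    using assms by (simp add: chan_map_def is_channel_nonneg)
next
  fix x
  have "((chan_map f W x \<circ> f) has_sum 1) UNIV"
    using assms by (simp add: o_def chan_map_def is_channel_def)
  then have "(chan_map f W x has_sum 1) (range f)"
    using assms(1) by (simp add: has_sum_reindex)
  then show "(chan_map f W x has_sum 1) UNIV"
    by (subst has_sum_cong_neutral[where T = "range f"]) (auto simp: chan_map_def)
qed

lemma sym_cap_chan_map:
  assumes "inj f" "is_channel W"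
  shows "sym_cap (chan_map f W) = sym_cap W"
proof -
  have "cap_term (chan_map f W) \<circ> f = cap_term W"
    using assms(1) by (simp add: o_def cap_term_def[abs_def] chan_map_def)
  then have "(cap_term (chan_map f W) has_sum sym_cap W) (range f)"
    using has_sum_cap_term[OF assms(2)] assms(1) by (simp add: has_sum_reindex)
  then have "(cap_term (chan_map f W) has_sum sym_cap W) UNIV"
    by (subst (asm) has_sum_cong_neutral[where T = UNIV])
      (auto simp: cap_term_def chan_map_def jensen_gap_def plogp_def)
  with has_sum_cap_term[OF is_channel_chan_map[OF assms]] show ?thesis
    using has_sum_unique by blast
qed

lemma has_sum_half_product:
  assumes "is_channel W" "is_channel V"
  shows "((\<lambda>(y, z). 1/2 * W a y * V b z) has_sum 1/2) UNIV"
proof -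
  have "((\<lambda>y. 1/2 * W a y) has_sum 1/2 * 1) UNIV"
    using assms by (intro has_sum_cmult_right) (simp add: is_channel_def)
  moreover have "(V b has_sum 1) UNIV"
    using assms by (simp add: is_channel_def)
  ultimately have "((\<lambda>(y, z). 1/2 * W a y * V b z) has_sum 1/2 * 1 * 1) (UNIV \<times> UNIV)"
    by (rule has_sum_mult_product) (use is_channel_nonneg[OF assms(1)] is_channel_nonneg[OF assms(2)] in auto)
  then show ?thesis
    by simp
qed

lemma is_channel_chan_minus:
  assumes "is_channel W" "is_channel V"
  shows "is_channel (chan_minus W V)"
  unfolding is_channel_def
proof (intro conjI allI)
  fix x p
  show "0 \<le> chan_minus W V x p"
    using assms by (cases p) (simp add: chan_minus_def UNIV_bool is_channel_nonneg)
next
  fix x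
  have "chan_minus W V x
      = (\<lambda>p. (\<lambda>(y, z). 1/2 * W (False \<noteq> x) y * V False z) p + (\<lambda>(y, z). 1/2 * W (True \<noteq> x) y * V True z) p)"
    by (auto simp: chan_minus_def UNIV_bool)
  moreover have "(\<dots> has_sum 1/2 + 1/2) UNIV"
    by (intro has_sum_add has_sum_half_product assms)
  ultimately show "(chan_minus W V x has_sum 1) UNIV"
    by simp
qed

lemma is_channel_chan_plus:
  assumes "is_channel W" "is_channel V"
  shows "is_channel (chan_plus W V)"
  unfolding is_channel_def
proof (intro conjI allI)
  fix x p
  show "0 \<le> chan_plus W V x p"
    using assms by (cases p) (simp add: chan_plus_def is_channel_nonneg)
next
  fix x
  have "(chan_plus W V x has_sum 1/2 + 1/2) UNIV"
    using has_sum_half_product[OF assms, of "False \<noteq> x" x] has_sum_half_product[OF assms, of "True \<noteq> x" x]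
    by (intro has_sum_split_bool) (simp_all add: chan_plus_def)
  then show "(chan_plus W V x has_sum 1) UNIV"
    by simp
qed

lemma cap_term_chan_minus:
  "cap_term (chan_minus W V) (y, z)
    = jensen_gap (1/2 * W False y * V False z + 1/2 * W True y * V True z)
                 (1/2 * W True y * V False z + 1/2 * W False y * V True z)"
  by (simp add: cap_term_def chan_minus_def UNIV_bool)

lemma cap_term_chan_plus:
  "cap_term (chan_plus W V) (y, z, False) = jensen_gap (1/2 * W False y * V False z) (1/2 * W True y * V True z)"
  "cap_term (chan_plus W V) (y, z, True) = jensen_gap (1/2 * W True y * V False z) (1/2 * W False y * V True z)"
  by (simp_all add: cap_term_def chan_plus_def)

lemma has_sum_cap_term_product:
  assumes "is_channel W" "is_channel V"
  shows "((\<lambda>(y, z). cap_term W y * out_dist V z) has_sum sym_cap W) UNIV"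
    and "((\<lambda>(y, z). out_dist W y * cap_term V z) has_sum sym_cap V) UNIV"
  using has_sum_mult_product[OF has_sum_cap_term[OF assms(1)] has_sum_out_dist[OF assms(2)]]
    has_sum_mult_product[OF has_sum_out_dist[OF assms(1)] has_sum_cap_term[OF assms(2)]]
    cap_term_nonneg[OF assms(1)] cap_term_nonneg[OF assms(2)]
    is_channel_nonneg[OF assms(1)] is_channel_nonneg[OF assms(2)]
  by (simp_all add: out_dist_def)

lemma sym_cap_chan_minus_le:
  assumes "is_channel W" "is_channel V"
  shows "sym_cap (chan_minus W V) \<le> sym_cap W"
proof (rule has_sum_mono[OF has_sum_cap_term[OF is_channel_chan_minus[OF assms]]
      has_sum_cap_term_product(1)[OF assms]])
  fix p :: "'a \<times> 'b"
  obtain y z where p: "p = (y, z)"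
    by (cases p)
  show "cap_term (chan_minus W V) p \<le> (\<lambda>(y, z). cap_term W y * out_dist V z) p"
    unfolding p prod.case cap_term_chan_minus unfolding cap_term_def out_dist_def
    by (rule jensen_gap_mix_le) (use is_channel_nonneg[OF assms(1)] is_channel_nonneg[OF assms(2)] in auto)
qed

lemma sym_cap_chan_minus_add_plus:
  assumes "is_channel W" "is_channel V"
  shows "sym_cap (chan_minus W V) + sym_cap (chan_plus W V) = sym_cap W + sym_cap V"
proof -
  define total where "total = (\<lambda>(y, z). cap_term W y * out_dist V z + out_dist W y * cap_term V z)"
  define slice where "slice u = (\<lambda>(y, z). cap_term (chan_plus W V) (y, z, u))" for u
  have chain: "cap_term (chan_minus W V) p + slice False p + slice True p = total p" for p
  proof -
    obtain y z where p: "p = (y, z)"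
      by (cases p)
    show ?thesis
      unfolding p slice_def total_def prod.case cap_term_chan_minus cap_term_chan_plus
      unfolding cap_term_def out_dist_def
      by (rule jensen_gap_chain) (use is_channel_nonneg[OF assms(1)] is_channel_nonneg[OF assms(2)] in auto)
  qed
  have total: "(total has_sum sym_cap W + sym_cap V) UNIV"
    unfolding total_def using has_sum_add[OF has_sum_cap_term_product[OF assms]]
    by (simp add: case_prod_beta')
  have slice_nonneg: "0 \<le> slice u p" for u p
    using cap_term_nonneg[OF is_channel_chan_plus[OF assms]] by (simp add: slice_def case_prod_beta')
  have "slice u summable_on UNIV" for u
  proof (rule summable_on_comparison_test[of total])
    show "total summable_on UNIV"
      using total by (auto simp: summable_on_def)
    show "slice u p \<le> total p" if "p \<in> UNIV" for p
      using chain[of p] slice_nonneg[of "\<not> u" p]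
        cap_term_nonneg[OF is_channel_chan_minus[OF assms], of p]
      by (cases u) auto
  qed (use slice_nonneg in auto)
  then have slices: "(slice u has_sum infsum (slice u) UNIV) UNIV" for u
    by (rule has_sum_infsum)
  then have "(cap_term (chan_plus W V) has_sum infsum (slice False) UNIV + infsum (slice True) UNIV) UNIV"
    by (intro has_sum_split_bool) (simp_all add: slice_def)
  then have plus: "sym_cap (chan_plus W V) = infsum (slice False) UNIV + infsum (slice True) UNIV"
    using has_sum_cap_term[OF is_channel_chan_plus[OF assms]] has_sum_unique by blast
  have "((\<lambda>p. cap_term (chan_minus W V) p + slice False p + slice True p)
      has_sum sym_cap (chan_minus W V) + infsum (slice False) UNIV + infsum (slice True) UNIV) UNIV"
    by (intro has_sum_add has_sum_cap_term is_channel_chan_minus assms slices)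
  with total show ?thesis
    unfolding chain plus using has_sum_unique by (simp add: add.assoc)
qed

lemma Lch_0: "Lch W 0 = chan_map Base W"
  and Rch_0: "Rch W 0 = chan_map Base W"
  by (simp_all add: Lch_def Rch_def)

lemma Lch_Suc: "Lch W (Suc n) = chan_map (\<lambda>(a, b). Pair2 a b) (chan_minus (Lch W n) (Rch W n))"
  and Rch_Suc: "Rch W (Suc n) = chan_map (\<lambda>(a, b, u). Pair3 a b u) (chan_plus (Lch W n) (Rch W n))"
  by (cases "LR W n"; simp add: Lch_def Rch_def)+

lemma inj_Base: "inj Base"
  and inj_Pair2: "inj (\<lambda>(a, b). Pair2 a b)"
  and inj_Pair3: "inj (\<lambda>(a, b, u). Pair3 a b u)"
  by (auto simp: inj_on_def)

lemma is_channel_Lch_Rch: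
  assumes "is_channel W"
  shows "is_channel (Lch W n) \<and> is_channel (Rch W n)"
  by (induction n)
    (simp_all add: Lch_0 Rch_0 Lch_Suc Rch_Suc is_channel_chan_map inj_Base inj_Pair2 inj_Pair3
      is_channel_chan_minus is_channel_chan_plus assms)

lemma sym_cap_Lch_Suc:
  assumes "is_channel W"
  shows "sym_cap (Lch W (Suc n)) = sym_cap (chan_minus (Lch W n) (Rch W n))"
  using is_channel_Lch_Rch[OF assms]
  by (simp add: Lch_Suc sym_cap_chan_map inj_Pair2 is_channel_chan_minus)

lemma sym_cap_Rch_Suc:
  assumes "is_channel W"
  shows "sym_cap (Rch W (Suc n)) = sym_cap (chan_plus (Lch W n) (Rch W n))"
  using is_channel_Lch_Rch[OF assms]
  by (simp add: Rch_Suc sym_cap_chan_map inj_Pair3 is_channel_chan_plus)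

lemma sym_cap_Lch_add_Rch:
  assumes "is_channel W"
  shows "sym_cap (Lch W n) + sym_cap (Rch W n) = 2 * sym_cap W"
proof (induction n)
  case 0
  show ?case
    using assms by (simp add: Lch_0 Rch_0 sym_cap_chan_map inj_Base)
next
  case (Suc n)
  then show ?case
    using is_channel_Lch_Rch[OF assms]
    by (simp add: sym_cap_Lch_Suc sym_cap_Rch_Suc sym_cap_chan_minus_add_plus assms)
qed

lemma sym_cap_Lch_Suc_le:
  assumes "is_channel W"
  shows "sym_cap (Lch W (Suc n)) \<le> sym_cap (Lch W n)"
  using is_channel_Lch_Rch[OF assms]
  by (simp add: sym_cap_Lch_Suc sym_cap_chan_minus_le assms)

lemma sym_cap_Lch_le_Rch:
  assumes "is_channel W"
  shows "sym_cap (Lch W n) \<le> sym_cap (Rch W n)"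
proof (induction n)
  case 0
  show ?case
    by (simp add: Lch_0 Rch_0)
next
  case (Suc n)
  then show ?case
    using sym_cap_Lch_Suc_le[OF assms, of n]
      sym_cap_Lch_add_Rch[OF assms, of n] sym_cap_Lch_add_Rch[OF assms, of "Suc n"]
    by linarith
qed

theorem mainTheorem2:
  fixes W :: "'y chan" and n :: nat
  assumes "is_channel W"
  shows "sym_cap (Lch W n) + sym_cap (Rch W n) = 2 * sym_cap W
       \<and> sym_cap (Lch W (Suc n)) \<le> sym_cap (Lch W n)
       \<and> sym_cap (Lch W n) \<le> sym_cap (Rch W n)
       \<and> sym_cap (Rch W n) \<le> sym_cap (Rch W (Suc n))"
  using sym_cap_Lch_add_Rch[OF assms, of n] sym_cap_Lch_add_Rch[OF assms, of "Suc n"]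
    sym_cap_Lch_Suc_le[OF assms, of n] sym_cap_Lch_le_Rch[OF assms, of n]
  by linarith

end
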